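(* Let $0<\alpha\le\delta<\infty$ and $0<\gamma<\tfrac13$. The map $\mathcal R^a_1(a)_k=\frac{1}{k+1}\sum_{n=0}^ka_na_{k-n}$ ($k\in\mathbb N_0$) maps $X_{\alpha,\delta}$ into itself and is continuous with respect to the metric $d(a,b)=\sum_{k\ge0}(\gamma/\delta)^k|a_k-b_k|$.
   Context: $X_{\alpha,\delta}$ is the set of real sequences $a=(a_k)_{k\ge0}$ with $a_0=1$, $a_1=\alpha$, $0\le a_k\le\delta^k$ for $k\ge2$. *)

theory Defs
  imports "HOL-Analysis.Analysis"
begin

definition Xad :: "real \<Rightarrow> real \<Rightarrow> (nat \<Rightarrow> real) set" where
  "Xad \<alpha> \<delta> = {a. a 0 = 1 \<and> a 1 = \<alpha> \<and> (\<forall>k\<ge>2. 0 \<le> a k \<and> a k \<le> \<delta> ^ k)}"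

definition R1 :: "(nat \<Rightarrow> real) \<Rightarrow> nat \<Rightarrow> real" where
  "R1 a k = (1 / real (k + 1)) * (\<Sum>n = 0..k. a n * a (k - n))"

definition dmet :: "real \<Rightarrow> real \<Rightarrow> (nat \<Rightarrow> real) \<Rightarrow> (nat \<Rightarrow> real) \<Rightarrow> real" where
  "dmet \<gamma> \<delta> a b = (\<Sum>k. (\<gamma> / \<delta>) ^ k * \<bar>a k - b k\<bar>)"

end

theory Submission
  imports Defs
begin

text \<open>
  Each product a(n) a(k-n) lies in [0, \<delta>^k], hence so does their average R1(a)(k).
  For continuity put r = \<gamma>/\<delta> and u(n) = r^n |a(n) - b(n)|. The bound |a(n)| \<le> \<delta>^n gives
  r^k |a(n) a(k-n) - b(n) b(k-n)| \<le> u(n) \<gamma>^(k-n) + \<gamma>^n u(k-n), so the weighted differences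
  of R1 a and R1 b are dominated by twice the Cauchy product of u with the geometric sequence \<gamma>^n.
  Summing yields the Lipschitz bound d(R1 a, R1 b) \<le> 2 d(a, b) / (1 - \<gamma>); only \<gamma> < 1 is needed.
\<close>

lemma Xad_bounds:
  assumes "a \<in> Xad \<alpha> \<delta>" "0 \<le> \<alpha>" "\<alpha> \<le> \<delta>"
  shows "0 \<le> a j \<and> a j \<le> \<delta> ^ j"
proof -
  consider "j = 0" | "j = 1" | "j \<ge> 2" by linarith
  then show ?thesis using assms unfolding Xad_def by cases auto
qed

lemma Xad_abs_le: "a \<in> Xad \<alpha> \<delta> \<Longrightarrow> 0 \<le> \<alpha> \<Longrightarrow> \<alpha> \<le> \<delta> \<Longrightarrow> \<bar>a j\<bar> \<le> \<delta> ^ j"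
  using Xad_bounds[of a \<alpha> \<delta> j] by (simp add: abs_of_nonneg)

lemma R1_mem_Xad:
  assumes a: "a \<in> Xad \<alpha> \<delta>" and "0 \<le> \<alpha>" "\<alpha> \<le> \<delta>"
  shows "R1 a \<in> Xad \<alpha> \<delta>"
proof -
  have a0: "a 0 = 1" and a1: "a 1 = \<alpha>" using a unfolding Xad_def by auto
  note bounds = Xad_bounds[OF assms]
  have "R1 a 1 = \<alpha>"
    using a0 a1 by (simp add: R1_def atLeast0AtMost atMost_Suc)
  moreover have "0 \<le> R1 a k \<and> R1 a k \<le> \<delta> ^ k" for k
  proof -
    have "(\<Sum>n = 0..k. a n * a (k - n)) \<le> (\<Sum>n = 0..k. \<delta> ^ n * \<delta> ^ (k - n))"
      using bounds by (intro sum_mono mult_mono) (auto intro: order_trans)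
    also have "\<dots> = real (k + 1) * \<delta> ^ k"
      by (simp flip: power_add)
    finally show ?thesis
      using bounds by (simp add: R1_def field_simps sum_nonneg)
  qed
  ultimately show ?thesis using a0 by (simp add: Xad_def R1_def)
qed

lemma weighted_product_diff_le:
  fixes a b :: "nat \<Rightarrow> real"
  assumes a: "\<And>j. \<bar>a j\<bar> \<le> \<delta> ^ j" and b: "\<And>j. \<bar>b j\<bar> \<le> \<delta> ^ j"
    and "0 < \<delta>" "0 \<le> \<gamma>" "n \<le> k"
  shows "(\<gamma>/\<delta>) ^ k * \<bar>a n * a (k - n) - b n * b (k - n)\<bar> \<le>
     (\<gamma>/\<delta>) ^ n * \<bar>a n - b n\<bar> * \<gamma> ^ (k - n) + \<gamma> ^ n * ((\<gamma>/\<delta>) ^ (k - n) * \<bar>a (k - n) - b (k - n)\<bar>)"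
proof -
  define r where "r = \<gamma>/\<delta>"
  have "r \<ge> 0" using assms by (simp add: r_def)
  have split_power: "r ^ k = r ^ n * r ^ (k - n)"
    using \<open>n \<le> k\<close> by (simp flip: power_add)
  have scale: "r ^ m * \<delta> ^ m = \<gamma> ^ m" for m
    using \<open>0 < \<delta>\<close> by (simp add: r_def flip: power_mult_distrib)
  have "a n * a (k - n) - b n * b (k - n) = (a n - b n) * a (k - n) + b n * (a (k - n) - b (k - n))"
    by (simp add: algebra_simps)
  then have "\<bar>a n * a (k - n) - b n * b (k - n)\<bar>
      \<le> \<bar>a n - b n\<bar> * \<bar>a (k - n)\<bar> + \<bar>b n\<bar> * \<bar>a (k - n) - b (k - n)\<bar>"
    by (metis abs_mult abs_triangle_ineq)
  also have "\<dots> \<le> \<bar>a n - b n\<bar> * \<delta> ^ (k - n) + \<delta> ^ n * \<bar>a (k - n) - b (k - n)\<bar>"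
    using a b \<open>0 < \<delta>\<close> by (intro add_mono mult_mono) auto
  finally have "r ^ k * \<bar>a n * a (k - n) - b n * b (k - n)\<bar>
      \<le> r ^ k * (\<bar>a n - b n\<bar> * \<delta> ^ (k - n) + \<delta> ^ n * \<bar>a (k - n) - b (k - n)\<bar>)"
    using \<open>r \<ge> 0\<close> by (simp add: mult_left_mono)
  also have "\<dots> = r ^ n * \<bar>a n - b n\<bar> * (r ^ (k - n) * \<delta> ^ (k - n))
      + (r ^ n * \<delta> ^ n) * (r ^ (k - n) * \<bar>a (k - n) - b (k - n)\<bar>)"
    unfolding split_power by (simp add: algebra_simps)
  also have "\<dots> = r ^ n * \<bar>a n - b n\<bar> * \<gamma> ^ (k - n) + \<gamma> ^ n * (r ^ (k - n) * \<bar>a (k - n) - b (k - n)\<bar>)"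
    by (simp only: scale)
  finally show ?thesis unfolding r_def .
qed

lemma R1_weighted_diff_le:
  fixes a b :: "nat \<Rightarrow> real"
  assumes "\<And>j. \<bar>a j\<bar> \<le> \<delta> ^ j" "\<And>j. \<bar>b j\<bar> \<le> \<delta> ^ j" "0 < \<delta>" "0 \<le> \<gamma>"
  defines "u \<equiv> \<lambda>n. (\<gamma>/\<delta>) ^ n * \<bar>a n - b n\<bar>"
  shows "(\<gamma>/\<delta>) ^ k * \<bar>R1 a k - R1 b k\<bar> \<le> 2 * (\<Sum>i\<le>k. u i * \<gamma> ^ (k - i))"
proof -
  let ?D = "\<lambda>n. \<bar>a n * a (k - n) - b n * b (k - n)\<bar>"
  have "R1 a k - R1 b k = (1 / real (k + 1)) * (\<Sum>n = 0..k. a n * a (k - n) - b n * b (k - n))"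
    unfolding R1_def by (simp add: sum_subtractf algebra_simps)
  then have "\<bar>R1 a k - R1 b k\<bar> \<le> \<bar>\<Sum>n = 0..k. a n * a (k - n) - b n * b (k - n)\<bar>"
    by (simp add: abs_mult divide_le_eq mult_le_cancel_left1)
  also have "\<dots> \<le> (\<Sum>n = 0..k. ?D n)"
    by (rule sum_abs)
  finally have "(\<gamma>/\<delta>) ^ k * \<bar>R1 a k - R1 b k\<bar> \<le> (\<gamma>/\<delta>) ^ k * (\<Sum>n = 0..k. ?D n)"
    using assms by (intro mult_left_mono) auto
  also have "\<dots> = (\<Sum>n = 0..k. (\<gamma>/\<delta>) ^ k * ?D n)"
    by (simp add: sum_distrib_left)
  also have "\<dots> \<le> (\<Sum>n = 0..k. u n * \<gamma> ^ (k - n)) + (\<Sum>n = 0..k. \<gamma> ^ n * u (k - n))"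
    unfolding u_def sum.distrib[symmetric]
    by (intro sum_mono weighted_product_diff_le) (use assms in auto)
  also have "(\<Sum>n = 0..k. \<gamma> ^ n * u (k - n)) = (\<Sum>n = 0..k. u n * \<gamma> ^ (k - n))"
    by (subst sum.atLeastAtMost_rev) (auto intro: sum.cong)
  finally show ?thesis by (simp add: atLeast0AtMost)
qed

lemma summable_weighted_diff:
  fixes a b :: "nat \<Rightarrow> real"
  assumes a: "\<And>j. \<bar>a j\<bar> \<le> \<delta> ^ j" and b: "\<And>j. \<bar>b j\<bar> \<le> \<delta> ^ j"
    and "0 < \<delta>" "0 \<le> \<gamma>" "\<gamma> < 1"
  shows "summable (\<lambda>n. (\<gamma>/\<delta>) ^ n * \<bar>a n - b n\<bar>)"
proof (rule summable_comparison_test)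
  have "\<bar>a n - b n\<bar> \<le> 2 * \<delta> ^ n" for n
    using a[of n] b[of n] by linarith
  then have "(\<gamma>/\<delta>) ^ n * \<bar>a n - b n\<bar> \<le> (\<gamma>/\<delta>) ^ n * (2 * \<delta> ^ n)" for n
    using assms by (intro mult_left_mono) auto
  also have "(\<gamma>/\<delta>) ^ n * (2 * \<delta> ^ n) = 2 * \<gamma> ^ n" for n
    using assms by (simp add: power_divide)
  finally show "\<exists>N. \<forall>n\<ge>N. norm ((\<gamma>/\<delta>) ^ n * \<bar>a n - b n\<bar>) \<le> 2 * \<gamma> ^ n"
    using assms by simp
  show "summable (\<lambda>n. 2 * \<gamma> ^ n)"
    using assms by (simp add: summable_geometric)
qed

lemma convolution_geometric_sums:
  fixes u :: "nat \<Rightarrow> real"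
  assumes "summable u" "\<And>n. 0 \<le> u n" "0 \<le> \<gamma>" "\<gamma> < 1"
  shows "(\<lambda>k. \<Sum>i\<le>k. u i * \<gamma> ^ (k - i)) sums (suminf u / (1 - \<gamma>))"
  using Cauchy_product_sums[of u "\<lambda>m. \<gamma> ^ m"] assms
  by (simp add: summable_geometric suminf_geometric divide_inverse)

lemma dmet_R1_le:
  fixes a b :: "nat \<Rightarrow> real"
  assumes "\<And>j. \<bar>a j\<bar> \<le> \<delta> ^ j" "\<And>j. \<bar>b j\<bar> \<le> \<delta> ^ j" "0 < \<delta>" "0 \<le> \<gamma>" "\<gamma> < 1"
  shows "dmet \<gamma> \<delta> (R1 a) (R1 b) \<le> 2 * dmet \<gamma> \<delta> a b / (1 - \<gamma>)"
proof -
  define u where "u n = (\<gamma>/\<delta>) ^ n * \<bar>a n - b n\<bar>" for n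
  define c where "c k = 2 * (\<Sum>i\<le>k. u i * \<gamma> ^ (k - i))" for k
  have "(\<lambda>k. \<Sum>i\<le>k. u i * \<gamma> ^ (k - i)) sums (dmet \<gamma> \<delta> a b / (1 - \<gamma>))"
    unfolding dmet_def u_def
    by (intro convolution_geometric_sums summable_weighted_diff) (use assms in auto)
  from sums_mult[OF this, of 2] have c_sums: "c sums (2 * dmet \<gamma> \<delta> a b / (1 - \<gamma>))"
    by (simp add: c_def[abs_def])
  have c_bound: "(\<gamma>/\<delta>) ^ k * \<bar>R1 a k - R1 b k\<bar> \<le> c k" for k
    unfolding c_def u_def by (rule R1_weighted_diff_le) (use assms in auto)
  have "summable (\<lambda>k. (\<gamma>/\<delta>) ^ k * \<bar>R1 a k - R1 b k\<bar>)"
  proof (rule summable_comparison_test)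
    show "\<exists>N. \<forall>k\<ge>N. norm ((\<gamma>/\<delta>) ^ k * \<bar>R1 a k - R1 b k\<bar>) \<le> c k"
      using c_bound assms by simp
    show "summable c"
      using c_sums by (rule sums_summable)
  qed
  then have "dmet \<gamma> \<delta> (R1 a) (R1 b) \<le> suminf c"
    unfolding dmet_def using c_bound c_sums by (intro suminf_le) (auto simp: sums_iff)
  then show ?thesis
    using c_sums by (simp add: sums_iff)
qed

theorem lemma8:
  fixes \<alpha> \<delta> \<gamma> :: real
  assumes "0 < \<alpha>" and "\<alpha> \<le> \<delta>" and "0 < \<gamma>" and "\<gamma> < 1/3"
  shows "(\<forall>a \<in> Xad \<alpha> \<delta>. R1 a \<in> Xad \<alpha> \<delta>) \<and>
    (\<forall>a \<in> Xad \<alpha> \<delta>. \<forall>\<epsilon>>0. \<exists>\<eta>>0. \<forall>b \<in> Xad \<alpha> \<delta>.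
        dmet \<gamma> \<delta> a b < \<eta> \<longrightarrow> dmet \<gamma> \<delta> (R1 a) (R1 b) < \<epsilon>)"
proof (intro conjI ballI allI impI)
  fix a assume "a \<in> Xad \<alpha> \<delta>"
  then show "R1 a \<in> Xad \<alpha> \<delta>" using R1_mem_Xad assms by simp
next
  fix a and \<epsilon> :: real assume a: "a \<in> Xad \<alpha> \<delta>" and "\<epsilon> > 0"
  have lipschitz: "dmet \<gamma> \<delta> (R1 a) (R1 b) \<le> 2 * dmet \<gamma> \<delta> a b / (1 - \<gamma>)" if "b \<in> Xad \<alpha> \<delta>" for b
    using assms by (intro dmet_R1_le Xad_abs_le[OF a] Xad_abs_le[OF that]) auto
  show "\<exists>\<eta>>0. \<forall>b \<in> Xad \<alpha> \<delta>. dmet \<gamma> \<delta> a b < \<eta> \<longrightarrow> dmet \<gamma> \<delta> (R1 a) (R1 b) < \<epsilon>"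
  proof (intro exI[of _ "\<epsilon> * (1 - \<gamma>) / 2"] conjI ballI impI)
    show "0 < \<epsilon> * (1 - \<gamma>) / 2" using \<open>\<epsilon> > 0\<close> assms by simp
    fix b assume "b \<in> Xad \<alpha> \<delta>" and "dmet \<gamma> \<delta> a b < \<epsilon> * (1 - \<gamma>) / 2"
    moreover from this have "2 * dmet \<gamma> \<delta> a b / (1 - \<gamma>) < \<epsilon>"
      using assms by (simp add: field_simps)
    ultimately show "dmet \<gamma> \<delta> (R1 a) (R1 b) < \<epsilon>"
      using lipschitz by fastforce
  qed
qed

end
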